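(* Let $H$ and $L$ be Hilbert spaces, let $T:H\to L$ be a bounded linear operator, and let $\mathcal{A}\subset H$ be nonempty. Suppose $T$ is bi-Lipschitz from $\mathcal{A}$ to $L$ with constants $\alpha,\beta>0$, i.e. $\alpha\|f_1-f_2\|^2\le\|T(f_1-f_2)\|^2\le\beta\|f_1-f_2\|^2$ for all $f_1,f_2\in\mathcal{A}$. Let $f\in H$, $e\in L$ and $g=Tf+e$. Let $\epsilon,\delta>0$. Let $f_{opt}^\epsilon\in\mathcal{A}$ be any element with $\|g-Tf_{opt}^\epsilon\|^2\le\inf_{h\in\mathcal{A}}\|g-Th\|^2+\epsilon$, and let $f_{\mathcal{A}}^\delta\in\mathcal{A}$ be any element with $\|f-f_{\mathcal{A}}^\delta\|^2\le\inf_{h\in\mathcal{A}}\|f-h\|^2+\delta$. Then \[ \|f-f_{opt}^\epsilon\|\le\frac{2}{\sqrt{\alpha}}\|T(f-f_{\mathcal{A}}^\delta)+e\|+\inf_{\tilde f\in\mathcal{A}}\|f-\tilde f\|+\frac{\sqrt{\epsilon}}{\sqrt{\alpha}}+\sqrt{\delta}. \]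
   Context: The elements $f_{opt}^\epsilon$ ("$\epsilon$-optimal estimates") and $f_{\mathcal{A}}^\delta$ (a "$\delta$-projection" of $f$ onto $\mathcal{A}$) exist since $\mathcal{A}$ is nonempty and $\epsilon,\delta>0$. *)

theory Defs
  imports "HOL-Analysis.Analysis"
begin

end

theory Submission
  imports Defs
begin

text \<open>
  Split \<open>f - f_opt = (f - f_A) + (f_A - f_opt)\<close>. The first term is within \<open>sqrt \<delta>\<close> of the
  distance from \<open>f\<close> to \<open>A\<close>. For the second, both \<open>T f_A\<close> and \<open>T f_opt\<close> are close to \<open>g\<close>:
  \<open>g - T f_A = T (f - f_A) + e\<close>, and \<open>T f_opt\<close> is at most \<open>sqrt \<epsilon>\<close> farther from \<open>g\<close> than \<open>T f_A\<close>.
  Hence \<open>T (f_A - f_opt)\<close> is small, and the lower bi-Lipschitz bound on \<open>A\<close> transfers this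
  to \<open>f_A - f_opt\<close> at the cost of the factor \<open>1 / sqrt \<alpha>\<close>.
\<close>

lemma le_add_sqrt_of_power2_le:
  fixes a b c :: real
  assumes "0 \<le> a" "0 \<le> b" "0 \<le> c" and "a\<^sup>2 \<le> b\<^sup>2 + c"
  shows "a \<le> b + sqrt c"
proof (rule power2_le_imp_le)
  have "b\<^sup>2 + c \<le> (b + sqrt c)\<^sup>2"
    using assms by (simp add: power2_eq_square algebra_simps)
  then show "a\<^sup>2 \<le> (b + sqrt c)\<^sup>2"
    using assms(4) by linarith
qed (use assms in simp)

lemma near_minimizer_le_add_sqrt:
  fixes \<phi> :: "'a \<Rightarrow> real"
  assumes nonneg: "\<And>y. 0 \<le> \<phi> y" and "0 \<le> c"
    and near_min: "(\<phi> x)\<^sup>2 \<le> (INF y\<in>A. (\<phi> y)\<^sup>2) + c" and "y \<in> A"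
  shows "\<phi> x \<le> \<phi> y + sqrt c"
proof (rule le_add_sqrt_of_power2_le)
  have "bdd_below ((\<lambda>y. (\<phi> y)\<^sup>2) ` A)"
    by (rule bdd_belowI[of _ 0]) auto
  then have "(INF y\<in>A. (\<phi> y)\<^sup>2) \<le> (\<phi> y)\<^sup>2"
    using \<open>y \<in> A\<close> by (rule cINF_lower)
  then show "(\<phi> x)\<^sup>2 \<le> (\<phi> y)\<^sup>2 + c"
    using near_min by linarith
qed (use assms in auto)

lemma near_minimizer_le_INF_add_sqrt:
  fixes \<phi> :: "'a \<Rightarrow> real"
  assumes "A \<noteq> {}" and "\<And>y. 0 \<le> \<phi> y" and "0 \<le> c"
    and "(\<phi> x)\<^sup>2 \<le> (INF y\<in>A. (\<phi> y)\<^sup>2) + c"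
  shows "\<phi> x \<le> (INF y\<in>A. \<phi> y) + sqrt c"
proof -
  have "\<phi> x - sqrt c \<le> (INF y\<in>A. \<phi> y)"
  proof (rule cINF_greatest[OF \<open>A \<noteq> {}\<close>])
    fix y assume "y \<in> A"
    with assms(2-4) show "\<phi> x - sqrt c \<le> \<phi> y"
      using near_minimizer_le_add_sqrt[of \<phi> c x A y] by simp
  qed
  then show ?thesis by simp
qed

lemma norm_le_of_lower_bound:
  fixes x :: "'a::real_normed_vector" and y :: "'b::real_normed_vector"
  assumes "0 < \<alpha>" and "\<alpha> * (norm x)\<^sup>2 \<le> (norm y)\<^sup>2"
  shows "norm x \<le> norm y / sqrt \<alpha>"
proof -
  have "(sqrt \<alpha> * norm x)\<^sup>2 \<le> (norm y)\<^sup>2"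
    using assms by (simp add: power_mult_distrib)
  then have "sqrt \<alpha> * norm x \<le> norm y"
    by (rule power2_le_imp_le) simp
  with \<open>0 < \<alpha>\<close> show ?thesis
    by (simp add: pos_le_divide_eq mult.commute)
qed

lemma norm_diff_le_residuals_of_lower_bound:
  fixes T :: "'a::real_normed_vector \<Rightarrow> 'b::real_normed_vector"
  assumes "linear T" and "0 < \<alpha>"
    and "\<alpha> * (norm (x - y))\<^sup>2 \<le> (norm (T (x - y)))\<^sup>2"
  shows "norm (x - y) \<le> (norm (g - T x) + norm (g - T y)) / sqrt \<alpha>"
proof -
  have "T (x - y) = (g - T y) - (g - T x)"
    using linear_diff[OF \<open>linear T\<close>] by simp
  then have "norm (T (x - y)) \<le> norm (g - T x) + norm (g - T y)"
    by (metis add.commute norm_triangle_ineq4)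
  moreover have "norm (x - y) \<le> norm (T (x - y)) / sqrt \<alpha>"
    using assms(2,3) by (rule norm_le_of_lower_bound)
  ultimately show ?thesis
    using \<open>0 < \<alpha>\<close> by (smt (verit) divide_right_mono real_sqrt_gt_zero)
qed

theorem mainTheorem2:
  fixes T :: "'h::{real_inner, complete_space} \<Rightarrow> 'l::{real_inner, complete_space}"
    and A :: "'h set" and f f_opt f_A :: 'h and e g :: 'l
    and \<alpha> \<beta> \<epsilon> \<delta> :: real
  assumes "bounded_linear T"
    and "A \<noteq> {}"
    and "\<alpha> > 0" and "\<beta> > 0"
    and "\<And>f1 f2. f1 \<in> A \<Longrightarrow> f2 \<in> A \<Longrightarrow>
           \<alpha> * (norm (f1 - f2))^2 \<le> (norm (T (f1 - f2)))^2 \<and>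
           (norm (T (f1 - f2)))^2 \<le> \<beta> * (norm (f1 - f2))^2"
    and "g = T f + e"
    and "\<epsilon> > 0" and "\<delta> > 0"
    and "f_opt \<in> A"
    and "(norm (g - T f_opt))^2 \<le> (INF h\<in>A. (norm (g - T h))^2) + \<epsilon>"
    and "f_A \<in> A"
    and "(norm (f - f_A))^2 \<le> (INF h\<in>A. (norm (f - h))^2) + \<delta>"
  shows "norm (f - f_opt) \<le> 2 / sqrt \<alpha> * norm (T (f - f_A) + e)
           + (INF h\<in>A. norm (f - h)) + sqrt \<epsilon> / sqrt \<alpha> + sqrt \<delta>"
proof -
  have lin: "linear T"
    using \<open>bounded_linear T\<close> by (rule bounded_linear.linear)
  have "g - T f_A = T (f - f_A) + e"
    using \<open>g = T f + e\<close> linear_diff[OF lin, of f f_A] by (simp add: algebra_simps)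
  then have residual: "norm (g - T f_A) = norm (T (f - f_A) + e)"
    by simp
  have approx: "norm (f - f_A) \<le> (INF h\<in>A. norm (f - h)) + sqrt \<delta>"
    using near_minimizer_le_INF_add_sqrt[of A "\<lambda>h. norm (f - h)"] assms(2,8,12) by simp
  have opt: "norm (g - T f_opt) \<le> norm (g - T f_A) + sqrt \<epsilon>"
    using near_minimizer_le_add_sqrt[of "\<lambda>h. norm (g - T h)"] assms(7,10,11) by simp
  have "norm (f_A - f_opt) \<le> (norm (g - T f_A) + norm (g - T f_opt)) / sqrt \<alpha>"
    using norm_diff_le_residuals_of_lower_bound[OF lin \<open>\<alpha> > 0\<close>] assms(5)[OF \<open>f_A \<in> A\<close> \<open>f_opt \<in> A\<close>] by blast
  also have "\<dots> \<le> (2 * norm (T (f - f_A) + e) + sqrt \<epsilon>) / sqrt \<alpha>"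
    using opt residual \<open>\<alpha> > 0\<close> by (simp add: divide_right_mono)
  also have "\<dots> = 2 / sqrt \<alpha> * norm (T (f - f_A) + e) + sqrt \<epsilon> / sqrt \<alpha>"
    by (simp add: add_divide_distrib)
  finally have stable: "norm (f_A - f_opt) \<le> 2 / sqrt \<alpha> * norm (T (f - f_A) + e) + sqrt \<epsilon> / sqrt \<alpha>" .
  have "norm (f - f_opt) \<le> norm (f - f_A) + norm (f_A - f_opt)"
    using norm_triangle_ineq[of "f - f_A" "f_A - f_opt"] by simp
  with approx stable show ?thesis
    by linarith
qed

end
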